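(* Let $\mu>0$. For $T_0\in\mathcal T_{\rm fin}$ of height $r$ with $K=|D_r(T_0)|$ define $$\Xi(T_0)=e^{-\mu(r-1)}4^{-|T_0|}2^{K+1}\sum_{R=1}^K\binom KR\frac{\mu^{R-1}}{(R-1)!}.$$ Then $\sum_{T_0\in\mathcal T_{\rm fin}:\,h(T_0)=r}\Xi(T_0)=1$ for every $r\ge1$.
   Context: Rooted planar trees (root of degree 1); $D_r(T)$ = vertices at height $r$; $|T|$ = number of edges; $h(T)$ = height; $\mathcal T_{\rm fin}$ = finite trees. *)

theory Defs
  imports "HOL-Analysis.Analysis"
begin

text \<open>Finite rooted planar (ordered) trees: a vertex with an ordered list of subtrees.\<close>
datatype ptree = Node "ptree list"

fun edges :: "ptree \<Rightarrow> nat" where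
  "edges (Node ts) = sum_list (map (\<lambda>t. Suc (edges t)) ts)"

fun height :: "ptree \<Rightarrow> nat" where
  "height (Node ts) = foldr max (map (\<lambda>t. Suc (height t)) ts) 0"

text \<open>Number of vertices at distance n from the root, i.e. the cardinality of D_n(T).\<close>
fun level_count :: "nat \<Rightarrow> ptree \<Rightarrow> nat" where
  "level_count 0 t = 1"
| "level_count (Suc n) (Node ts) = sum_list (map (level_count n) ts)"

text \<open>The trees of T_fin: root of degree 1.\<close>
definition planted :: "ptree \<Rightarrow> bool" where
  "planted T \<longleftrightarrow> (\<exists>t. T = Node [t])"

definition Xi :: "real \<Rightarrow> ptree \<Rightarrow> real" where
  "Xi \<mu> T = (let r = height T; K = level_count r T in
     exp (- \<mu> * (real r - 1)) * (1/4) ^ edges T * 2 ^ (K + 1) *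
     (\<Sum>R = 1..K. real (K choose R) * \<mu> ^ (R - 1) / fact (R - 1)))"

end

theory Submission
  imports Defs
begin

text \<open>Let F_n(y) be the sum of 4^(-|t|) y^|D_n(t)| over the trees t of height at most n.
  Splitting a tree at its root into the list of its subtrees gives F_(n+1) = 1 / (1 - F_n / 4),
  which at y = 2(1 + x) is solved by F_n = 2 + 2x / (1 - nx). Expanding (1 + x)^K binomially and
  comparing coefficients of this power series in x shows that 4^(-|t|) 2^K (K choose k) sums to
  2 n^(k-1) for every k \<ge> 1. Summing against \<mu>^(k-1) / (k-1)! gives 2 e^(n\<mu>) for the trees of
  height n, and the root edge of a planted tree of height n + 1 supplies the remaining factor
  e^(-n\<mu>) / 2.\<close>

lemma height_Node_le_Suc_iff: "height (Node ts) \<le> Suc n \<longleftrightarrow> (\<forall>t\<in>set ts. height t \<le> n)"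
  by (induction ts) auto

lemma height_le_0_iff: "height t \<le> 0 \<longleftrightarrow> t = Node []"
  by (cases t; rename_tac ts; case_tac ts) auto

lemma height_lt_height_Node: "t \<in> set ts \<Longrightarrow> height t < height (Node ts)"
  by (induction ts) auto

lemma level_count_eq_0: "height t < n \<Longrightarrow> level_count n t = 0"
proof (induction n arbitrary: t)
  case (Suc n)
  obtain ts where t: "t = Node ts" by (cases t)
  have "height u < n" if "u \<in> set ts" for u
    using Suc.prems t height_lt_height_Node[OF that] by simp
  then show ?case using Suc.IH t by (simp add: sum_list_eq_0_iff)
qed simp

definition level_weight :: "nat \<Rightarrow> real \<Rightarrow> ptree \<Rightarrow> real" where
  "level_weight n y t = (1/4) ^ edges t * y ^ level_count n t"

lemma level_weight_Node:
  "level_weight (Suc n) y (Node ts) = prod_list (map (\<lambda>t. level_weight n y t / 4) ts)"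
  by (induction ts) (simp_all add: level_weight_def power_add)

lemma bij_betw_Node_height_le:
  "bij_betw Node {ts. set ts \<subseteq> {t. height t \<le> n}} {t. height t \<le> Suc n}"
  by (rule bij_betwI[where g = "\<lambda>t. case t of Node ts \<Rightarrow> ts"])
     (auto split: ptree.split simp del: height.simps simp: height_Node_le_Suc_iff)

lemma has_sum_Sigma_nonneg:
  fixes f :: "'a \<times> 'b \<Rightarrow> real"
  assumes "\<And>x. x \<in> A \<Longrightarrow> ((\<lambda>y. f (x, y)) has_sum g x) (B x)" and "(g has_sum S) A"
    and "\<And>x y. x \<in> A \<Longrightarrow> y \<in> B x \<Longrightarrow> f (x, y) \<ge> 0"
  shows "(f has_sum S) (Sigma A B)"
proof (rule has_sum_SigmaI[OF assms(1,2)])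
  show "f summable_on Sigma A B"
    using assms by (intro summable_on_SigmaI[OF assms(1)]) (auto intro: has_sum_imp_summable)
qed

lemma has_sum_swap_nonneg:
  fixes f :: "'a \<Rightarrow> 'b \<Rightarrow> real"
  assumes "\<And>x. x \<in> A \<Longrightarrow> (f x has_sum g x) B" and "(g has_sum S) A"
    and "\<And>y. y \<in> B \<Longrightarrow> ((\<lambda>x. f x y) has_sum h y) A"
    and "\<And>x y. x \<in> A \<Longrightarrow> y \<in> B \<Longrightarrow> f x y \<ge> 0"
  shows "(h has_sum S) B"
proof -
  have "((\<lambda>(x, y). f x y) has_sum S) (A \<times> B)"
    by (rule has_sum_Sigma_nonneg[OF _ assms(2)]) (simp_all add: assms(1,4))
  then have "((\<lambda>(y, x). f x y) has_sum S) (B \<times> A)"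
    by (subst (asm) has_sum_swap) (simp add: case_prod_unfold)
  then show ?thesis
    by (rule has_sum_SigmaD) (simp add: assms(3))
qed

lemma has_sum_mult_nonneg:
  fixes g h :: "_ \<Rightarrow> real"
  assumes "(g has_sum s) A" and "(h has_sum s') B"
    and "\<And>a. a \<in> A \<Longrightarrow> g a \<ge> 0" and "\<And>b. b \<in> B \<Longrightarrow> h b \<ge> 0"
  shows "((\<lambda>(a, b). g a * h b) has_sum s * s') (A \<times> B)"
proof (rule has_sum_Sigma_nonneg)
  show "((\<lambda>b. (\<lambda>(a, b). g a * h b) (a, b)) has_sum g a * s') B" for a
    using has_sum_cmult_right[OF assms(2)] by simp
  show "((\<lambda>a. g a * s') has_sum s * s') A"
    using assms(1) by (rule has_sum_cmult_left)
qed (simp add: assms(3,4))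

lemma has_sum_prod_list_length:
  fixes g :: "'a \<Rightarrow> real"
  assumes "(g has_sum s) A" and "\<And>a. a \<in> A \<Longrightarrow> g a \<ge> 0"
  shows "((\<lambda>xs. prod_list (map g xs)) has_sum s ^ k) {xs. set xs \<subseteq> A \<and> length xs = k}"
proof (induction k)
  case 0
  have "((\<lambda>xs. prod_list (map g xs)) has_sum 1) {[]}"
    using has_sum_finite[of "{[]}" "\<lambda>xs. prod_list (map g xs)"] by simp
  moreover have "{xs. set xs \<subseteq> A \<and> length xs = 0} = {[]}" by auto
  ultimately show ?case by simp
next
  case (Suc k)
  have "((\<lambda>(a, xs). g a * prod_list (map g xs)) has_sum s * s ^ k)
      (A \<times> {xs. set xs \<subseteq> A \<and> length xs = k})"
    using Suc.IH assms(1) by (intro has_sum_mult_nonneg) (auto intro!: prod_list_nonneg assms(2))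
  also have "?this \<longleftrightarrow> ?case"
    by (rule has_sum_reindex_bij_witness[where i = "\<lambda>xs. (hd xs, tl xs)" and j = "\<lambda>(a, xs). a # xs"])
       (auto simp: length_Suc_conv)
  finally show ?case .
qed

lemma has_sum_prod_list:
  fixes g :: "'a \<Rightarrow> real"
  assumes "(g has_sum s) A" and "\<And>a. a \<in> A \<Longrightarrow> g a \<ge> 0" and "s < 1"
  shows "((\<lambda>xs. prod_list (map g xs)) has_sum 1 / (1 - s)) {xs. set xs \<subseteq> A}"
proof -
  have "s \<ge> 0" using assms(1,2) by (rule has_sum_nonneg)
  then have "((\<lambda>k. s ^ k) has_sum 1 / (1 - s)) UNIV"
    using geometric_sums[of s] assms(3) by (intro sums_nonneg_imp_has_sum) auto
  then have "((\<lambda>(k, xs). prod_list (map g xs)) has_sum 1 / (1 - s))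
      (SIGMA k:UNIV. {xs. set xs \<subseteq> A \<and> length xs = k})"
    using has_sum_prod_list_length[OF assms(1,2)]
    by (intro has_sum_Sigma_nonneg[where g = "\<lambda>k. s ^ k"]) (auto intro!: prod_list_nonneg assms(2))
  also have "?this \<longleftrightarrow> ?thesis"
    by (rule has_sum_reindex_bij_witness[where i = "\<lambda>xs. (length xs, xs)" and j = snd]) auto
  finally show ?thesis .
qed

lemma has_sum_level_weight:
  fixes x :: real
  assumes "0 \<le> x" and "real n * x < 1"
  shows "(level_weight n (2 * (1 + x)) has_sum 2 + 2 * x / (1 - real n * x)) {t. height t \<le> n}"
  using assms(2)
proof (induction n)
  case 0
  have "(level_weight 0 (2 * (1 + x)) has_sum 2 + 2 * x) {Node []}"
    using has_sum_finite[of "{Node []}" "level_weight 0 (2 * (1 + x))"] by (simp add: level_weight_def)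
  moreover have "{t. height t \<le> 0} = {Node []}" using height_le_0_iff by auto
  ultimately show ?case by simp
next
  case (Suc n)
  define F where "F = 2 + 2 * x / (1 - real n * x)"
  have nx: "real n * x < 1" "real (Suc n) * x < 1"
    using Suc.prems assms(1) by (auto simp: algebra_simps)
  have "((\<lambda>t. level_weight n (2 * (1 + x)) t / 4) has_sum F / 4) {t. height t \<le> n}"
    using Suc.IH[OF nx(1)] unfolding F_def by (rule has_sum_divide_const)
  moreover have "F / 4 < 1"
    using nx by (simp add: F_def field_simps)
  ultimately have "((\<lambda>ts. level_weight (Suc n) (2 * (1 + x)) (Node ts)) has_sum 1 / (1 - F / 4))
      {ts. set ts \<subseteq> {t. height t \<le> n}}"
    unfolding level_weight_Node using assms(1)
    by (intro has_sum_prod_list) (auto simp: level_weight_def)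
  moreover have "1 / (1 - F / 4) = 2 + 2 * x / (1 - real (Suc n) * x)"
    using nx by (simp add: F_def field_simps)
  ultimately show ?case
    using has_sum_reindex_bij_betw[OF bij_betw_Node_height_le] by metis
qed

lemma powser_zero_at_right_imp_coeff0:
  fixes a :: "nat \<Rightarrow> real"
  assumes "0 < s" and zero: "\<And>x. 0 < x \<Longrightarrow> x < s \<Longrightarrow> (\<lambda>n. a n * x ^ n) sums 0"
  shows "a 0 = 0"
proof -
  let ?f = "\<lambda>x. \<Sum>n. a n * x ^ n"
  have "(\<lambda>n. a n * x ^ n) sums ?f x" if "norm x < s" for x
  proof -
    have "summable (\<lambda>n. a n * ((\<bar>x\<bar> + s) / 2) ^ n)"
      using zero[of "(\<bar>x\<bar> + s) / 2"] that by (simp add: sums_iff)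
    moreover have "norm x < norm ((\<bar>x\<bar> + s) / 2)"
      using that by simp
    ultimately show ?thesis
      by (rule summable_sums[OF powser_inside])
  qed
  then have "(?f \<longlongrightarrow> a 0) (at 0)"
    by (rule powser_limit_0[OF assms(1)])
  then have "(?f \<longlongrightarrow> a 0) (at_right 0)"
    by (rule tendsto_mono[OF at_le, rotated]) simp
  moreover have "(?f \<longlongrightarrow> 0) (at_right 0)"
  proof (rule tendsto_eventually)
    show "eventually (\<lambda>x. ?f x = 0) (at_right 0)"
      unfolding eventually_at_right_field
      using assms(1) zero sums_unique by (intro exI[of _ s]) fastforce
  qed
  ultimately show ?thesis
    using tendsto_unique[OF trivial_limit_at_right_real] by blast
qed

lemma powser_zero_at_right_imp_zero:
  fixes a :: "nat \<Rightarrow> real"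
  assumes "0 < s" and "\<And>x. 0 < x \<Longrightarrow> x < s \<Longrightarrow> (\<lambda>n. a n * x ^ n) sums 0"
  shows "a n = 0"
  using assms(2)
proof (induction n arbitrary: a)
  case 0
  then show ?case by (rule powser_zero_at_right_imp_coeff0[OF assms(1)])
next
  case (Suc n)
  have "a 0 = 0" using Suc.prems by (rule powser_zero_at_right_imp_coeff0[OF assms(1)])
  have "(\<lambda>k. a (Suc k) * x ^ k) sums 0" if "0 < x" "x < s" for x
  proof -
    have "(\<lambda>k. a (Suc k) * x ^ Suc k) sums 0"
      using Suc.prems[OF that] \<open>a 0 = 0\<close> by (subst sums_Suc_iff) simp
    then have "(\<lambda>k. a (Suc k) * x ^ Suc k / x) sums (0 / x)" by (rule sums_divide)
    then show ?thesis using \<open>0 < x\<close> by simp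
  qed
  then show ?case by (rule Suc.IH)
qed

lemma powser_unique_at_right:
  fixes a b :: "nat \<Rightarrow> real"
  assumes "0 < s"
    and "\<And>x. 0 < x \<Longrightarrow> x < s \<Longrightarrow> (\<lambda>n. a n * x ^ n) sums f x"
    and "\<And>x. 0 < x \<Longrightarrow> x < s \<Longrightarrow> (\<lambda>n. b n * x ^ n) sums f x"
  shows "a = b"
proof
  fix n
  have "(\<lambda>n. (a n - b n) * x ^ n) sums 0" if "0 < x" "x < s" for x
    using sums_diff[OF assms(2,3)[OF that]] by (simp add: algebra_simps)
  then have "a n - b n = 0" using assms(1) by (intro powser_zero_at_right_imp_zero)
  then show "a n = b n" by simp
qed

lemma has_sum_exp_shift:
  fixes z :: real
  shows "((\<lambda>k. z ^ (k - 1) / fact (k - 1)) has_sum exp z) {1..}"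
proof -
  have "((\<lambda>k. z ^ k /\<^sub>R fact k) has_sum exp z) UNIV"
    using summable_norm_exp exp_converges by (rule norm_summable_imp_has_sum)
  also have "?this \<longleftrightarrow> ?thesis"
    by (rule has_sum_reindex_bij_witness[where i = "\<lambda>k. k - 1" and j = Suc]) (auto simp: divide_inverse)
  finally show ?thesis .
qed

lemma binomial_has_sum:
  fixes x :: real
  shows "((\<lambda>k. real (K choose k) * x ^ k) has_sum (1 + x) ^ K) UNIV"
proof -
  have "((\<lambda>k. real (K choose k) * x ^ k) has_sum (1 + x) ^ K) {..K}"
    using binomial_ring[of x 1 K] by (simp add: add.commute)
  then show ?thesis
    by (rule has_sum_cong_neutral[THEN iffD1, rotated -1]) auto
qed

lemma binomial_term_le:
  fixes x :: real
  assumes "0 \<le> x"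
  shows "real (K choose k) * x ^ k \<le> (1 + x) ^ K"
proof (rule has_sum_mono_neutral[OF _ binomial_has_sum])
  show "((\<lambda>j. real (K choose j) * x ^ j) has_sum real (K choose k) * x ^ k) {k}"
    using has_sum_finite[of "{k}" "\<lambda>j. real (K choose j) * x ^ j"] by simp
qed (use assms in auto)

lemma level_weight_binomial_has_sum:
  fixes x :: real
  shows "((\<lambda>k. level_weight n 2 t * real (level_count n t choose k) * x ^ k) has_sum
    level_weight n (2 * (1 + x)) t) UNIV"
  using has_sum_cmult_right[OF binomial_has_sum, of "level_weight n 2 t" "level_count n t" x]
  by (simp only: level_weight_def power_mult_distrib mult.assoc)

lemma summable_on_marked_level:
  "(\<lambda>t. level_weight n 2 t * real (level_count n t choose k)) summable_on {t. height t \<le> n}"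
proof (rule summable_on_comparison_test)
  define x :: real where "x = 1 / (real n + 2)"
  have x: "0 < x" "real n * x < 1" by (auto simp: x_def field_simps)
  show "(\<lambda>t. level_weight n (2 * (1 + x)) t / x ^ k) summable_on {t. height t \<le> n}"
    using has_sum_divide_const[OF has_sum_level_weight[OF _ x(2)]] x(1)
    by (auto intro: has_sum_imp_summable)
  show "level_weight n 2 t * real (level_count n t choose k) \<le> level_weight n (2 * (1 + x)) t / x ^ k"
    for t
  proof -
    have "level_weight n (2 * (1 + x)) t = level_weight n 2 t * (1 + x) ^ level_count n t"
      by (simp only: level_weight_def power_mult_distrib mult.assoc)
    moreover have "level_weight n 2 t \<ge> 0" by (simp add: level_weight_def)
    ultimately have "level_weight n 2 t * real (level_count n t choose k) * x ^ k
        \<le> level_weight n (2 * (1 + x)) t"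
      using binomial_term_le[of x "level_count n t" k] x(1)
      by (simp add: mult.assoc mult_left_mono)
    then show ?thesis using x(1) by (simp add: pos_le_divide_eq)
  qed
qed (simp add: level_weight_def)

lemma has_sum_marked_level:
  "((\<lambda>t. level_weight n 2 t * real (level_count n t choose k)) has_sum
     (if k = 0 then 2 else 2 * real n ^ (k - 1))) {t. height t \<le> n}"
proof -
  let ?T = "{t. height t \<le> n}"
  let ?a = "\<lambda>k t. level_weight n 2 t * real (level_count n t choose k)"
  define s :: real where "s = 1 / (real n + 1)"
  have s: "0 < s" "\<And>x. 0 < x \<Longrightarrow> x < s \<Longrightarrow> real n * x < 1"
    by (auto simp: s_def field_simps)
  define c :: "nat \<Rightarrow> real" where "c k = (if k = 0 then 2 else 2 * real n ^ (k - 1))" for k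
  define M where "M k = infsum (?a k) ?T" for k
  have "(\<lambda>k. M k * x ^ k) sums (2 + 2 * x / (1 - real n * x))" if "0 < x" "x < s" for x
  proof -
    have "((\<lambda>k. M k * x ^ k) has_sum 2 + 2 * x / (1 - real n * x)) UNIV"
    proof (rule has_sum_swap_nonneg)
      show "((\<lambda>k. ?a k t * x ^ k) has_sum level_weight n (2 * (1 + x)) t) UNIV" for t
        by (rule level_weight_binomial_has_sum)
      show "(level_weight n (2 * (1 + x)) has_sum 2 + 2 * x / (1 - real n * x)) ?T"
        using that s(2) by (intro has_sum_level_weight) auto
      show "((\<lambda>t. ?a k t * x ^ k) has_sum M k * x ^ k) ?T" for k
        unfolding M_def by (intro has_sum_cmult_left has_sum_infsum summable_on_marked_level)
      show "0 \<le> ?a k t * x ^ k" for t k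
        using that by (simp add: level_weight_def)
    qed
    then show ?thesis by (rule has_sum_imp_sums)
  qed
  moreover have "(\<lambda>k. c k * x ^ k) sums (2 + 2 * x / (1 - real n * x))" if "0 < x" "x < s" for x
  proof -
    have "norm (real n * x) < 1" using s(2)[OF that] that by simp
    then have "(\<lambda>k. 2 * x * (real n * x) ^ k) sums (2 * x * (1 / (1 - real n * x)))"
      by (intro sums_mult geometric_sums)
    then have "(\<lambda>k. c (Suc k) * x ^ Suc k) sums (2 * x / (1 - real n * x))"
      by (simp add: c_def power_mult_distrib mult_ac)
    then have "(\<lambda>k. c k * x ^ k) sums (2 * x / (1 - real n * x) + c 0 * x ^ 0)"
      by (subst (asm) sums_Suc_iff)
    then show ?thesis by (simp add: c_def add.commute)
  qed
  ultimately have "M = c"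
    by (rule powser_unique_at_right[OF s(1), where f = "\<lambda>x. 2 + 2 * x / (1 - real n * x)"])
  then have "infsum (?a k) ?T = c k"
    by (simp add: M_def fun_eq_iff)
  then show ?thesis
    using has_sum_infsum[OF summable_on_marked_level[of n k]] by (simp add: c_def)
qed

definition Xi_sum :: "real \<Rightarrow> nat \<Rightarrow> real" where
  "Xi_sum \<mu> K = (\<Sum>k = 1..K. real (K choose k) * \<mu> ^ (k - 1) / fact (k - 1))"

lemma Xi_planted:
  "Xi \<mu> (Node [t]) = exp (- \<mu> * real (height t)) / 2 *
    (level_weight (height t) 2 t * Xi_sum \<mu> (level_count (height t) t))"
  by (simp add: Xi_def Xi_sum_def level_weight_def Let_def)

lemma has_sum_level_weight_Xi_sum:
  fixes \<mu> :: real
  assumes "0 \<le> \<mu>"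
  shows "((\<lambda>t. level_weight n 2 t * Xi_sum \<mu> (level_count n t)) has_sum 2 * exp (real n * \<mu>))
    {t. height t \<le> n}"
proof (rule has_sum_swap_nonneg[where A = "{1..}"])
  let ?f = "\<lambda>k t. level_weight n 2 t * real (level_count n t choose k) * (\<mu> ^ (k - 1) / fact (k - 1))"
  show "(?f k has_sum 2 * ((real n * \<mu>) ^ (k - 1) / fact (k - 1))) {t. height t \<le> n}" if "k \<in> {1..}" for k
    using has_sum_cmult_left[OF has_sum_marked_level[of n k], where c = "\<mu> ^ (k - 1) / fact (k - 1)"] that
    by (simp add: power_mult_distrib mult.assoc)
  show "((\<lambda>k. 2 * ((real n * \<mu>) ^ (k - 1) / fact (k - 1))) has_sum 2 * exp (real n * \<mu>)) {1..}"
    by (intro has_sum_cmult_right has_sum_exp_shift)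
  show "((\<lambda>k. ?f k t) has_sum level_weight n 2 t * Xi_sum \<mu> (level_count n t)) {1..}" for t
  proof -
    have "((\<lambda>k. ?f k t) has_sum level_weight n 2 t * Xi_sum \<mu> (level_count n t)) {1..level_count n t}"
      using has_sum_finite[of "{1..level_count n t}" "\<lambda>k. ?f k t"]
      by (simp add: Xi_sum_def sum_distrib_left mult.assoc)
    then show ?thesis
      by (rule has_sum_cong_neutral[THEN iffD1, rotated -1]) auto
  qed
  show "0 \<le> ?f k t" for k t
    using assms by (simp add: level_weight_def)
qed

lemma has_sum_level_weight_Xi_sum_height_eq:
  fixes \<mu> :: real
  assumes "0 \<le> \<mu>"
  shows "((\<lambda>t. level_weight n 2 t * Xi_sum \<mu> (level_count n t)) has_sum 2 * exp (real n * \<mu>))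
    {t. height t = n}"
  using has_sum_level_weight_Xi_sum[OF assms]
  by (rule has_sum_cong_neutral[THEN iffD1, rotated -1]) (auto simp: level_count_eq_0 Xi_sum_def)

theorem mainTheorem12:
  fixes \<mu> :: real and r :: nat
  assumes "\<mu> > 0" and "r \<ge> 1"
  shows "(Xi \<mu> has_sum 1) {T. planted T \<and> height T = r}"
proof -
  obtain n where r: "r = Suc n" using assms(2) by (cases r) auto
  have "((\<lambda>t. exp (- \<mu> * real n) / 2 * (level_weight n 2 t * Xi_sum \<mu> (level_count n t))) has_sum 1)
      {t. height t = n}"
    using has_sum_cmult_right[OF has_sum_level_weight_Xi_sum_height_eq[of \<mu> n],
        where c = "exp (- \<mu> * real n) / 2"] assms(1)
    by (simp add: exp_minus field_simps)
  also have "?this \<longleftrightarrow> ?thesis"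
    by (rule has_sum_reindex_bij_witness[where i = "\<lambda>T. case T of Node ts \<Rightarrow> hd ts"
          and j = "\<lambda>t. Node [t]"])
       (auto simp: planted_def r Xi_planted)
  finally show ?thesis .
qed

end
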